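(* Let $\mu>0$, $\delta>0$, let $\gamma$ be a density matrix on $\mathbb{C}^\Lambda$ ($0\le\gamma\le1$) with density $\rho(x)=\gamma_{x,x}$, and let $\Omega=\{x\in\Lambda:\rho(x)<\delta\}$, $\Omega^c=\Lambda\setminus\Omega$. Then $$\mathrm{Tr}\{K_\mu\gamma\}\ \ge\ \mathrm{Tr}\{[P_\Omega^\perp K_\mu P_\Omega^\perp]_-\}-4d\,\delta^{1/2}\,|\partial\Omega|-\mu\sum_{x\in\Omega}\rho(x).$$
   Context: $\Lambda=\mathbb{Z}_L^d$ periodic lattice; $T_{x,y}=1$ if $|x-y|_1=1$, else $0$; $\Delta_{x,y}=T_{x,y}-2d\delta_{x,y}$; $K_\mu=-\Delta-\mu$; $[X]_-=\min\{X,0\}$ (so $\mathrm{Tr}[X]_-$ is the sum of negative eigenvalues). For $A\subseteq\Lambda$, $P_A$ is the orthogonal projection on $\mathbb{C}^\Lambda$ given by $(P_Af)(x)=f(x)$ for $x\in A$ and $0$ otherwise; $P_\Omega^\perp=1-P_\Omega=P_{\Omega^c}$. The boundary is $\partial\Omega=\{x\in\Omega:\mathrm{dist}_1(x,\Omega^c)=1\}$, where $\mathrm{dist}_1$ is the graph ($\ell^1$) distance on $\Lambda$; $|\partial\Omega|$ is its cardinality. *)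

theory Defs
  imports "Jordan_Normal_Form.Schur_Decomposition" "HOL-Computational_Algebra.Polynomial"
begin

text \<open>The periodic lattice Lambda = (Z_L)^d is encoded by the index set {0..<L^d}:
  a site k has coordinates (k div L^i) mod L for i < d (base-L digits).\<close>

definition n_sites :: "nat \<Rightarrow> nat \<Rightarrow> nat" where
  "n_sites d L = L ^ d"

definition site_coord :: "nat \<Rightarrow> nat \<Rightarrow> nat \<Rightarrow> nat" where
  "site_coord L i k = (k div L ^ i) mod L"

definition lat_dist :: "nat \<Rightarrow> nat \<Rightarrow> nat \<Rightarrow> nat \<Rightarrow> nat" where
  "lat_dist d L x y =
     (\<Sum>i<d. let a = site_coord L i x; b = site_coord L i y;
                 t = (if a \<le> b then b - a else a - b)
             in min t (L - t))"

definition hopT :: "nat \<Rightarrow> nat \<Rightarrow> complex mat" where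
  "hopT d L = mat (n_sites d L) (n_sites d L)
      (\<lambda>(x, y). if lat_dist d L x y = 1 then 1 else 0)"

definition lapl :: "nat \<Rightarrow> nat \<Rightarrow> complex mat" where
  "lapl d L = hopT d L - (of_nat (2 * d)) \<cdot>\<^sub>m 1\<^sub>m (n_sites d L)"

definition Kmu :: "nat \<Rightarrow> nat \<Rightarrow> real \<Rightarrow> complex mat" where
  "Kmu d L \<mu> = - lapl d L - (complex_of_real \<mu>) \<cdot>\<^sub>m 1\<^sub>m (n_sites d L)"

definition projP :: "nat \<Rightarrow> nat \<Rightarrow> nat set \<Rightarrow> complex mat" where
  "projP d L A = mat (n_sites d L) (n_sites d L)
      (\<lambda>(x, y). if x = y \<and> x \<in> A then 1 else 0)"

text \<open>Tr [X]_- : sum of the negative eigenvalues (with algebraic multiplicity),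
  eigenvalues being the roots of the characteristic polynomial.\<close>
definition mat_trace :: "complex mat \<Rightarrow> complex" where
  "mat_trace A = (\<Sum>i<dim_row A. A $$ (i, i))"

definition neg_trace :: "complex mat \<Rightarrow> real" where
  "neg_trace X = sum_mset (image_mset (\<lambda>z. min (Re z) 0) (proots (char_poly X)))"

definition density_matrix :: "nat \<Rightarrow> complex mat \<Rightarrow> bool" where
  "density_matrix n g \<longleftrightarrow> g \<in> carrier_mat n n \<and> mat_adjoint g = g \<and>
     (\<forall>v :: nat \<Rightarrow> complex.
        0 \<le> Re (\<Sum>i<n. \<Sum>j<n. cnj (v i) * g $$ (i, j) * v j) \<and>
        Re (\<Sum>i<n. \<Sum>j<n. cnj (v i) * g $$ (i, j) * v j) \<le> (\<Sum>i<n. (cmod (v i))\<^sup>2))"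

definition lat_boundary :: "nat \<Rightarrow> nat \<Rightarrow> nat set \<Rightarrow> nat set" where
  "lat_boundary d L \<Omega> = {x \<in> \<Omega>. \<exists>y \<in> {..<n_sites d L} - \<Omega>. lat_dist d L x y = 1}"

end

theory Submission
  imports Defs
begin

text \<open>
  Split \<open>Tr (K\<^sub>\<mu> \<gamma>)\<close> into the blocks \<open>\<Omega>\<^sup>c \<times> \<Omega>\<^sup>c\<close>, \<open>\<Omega> \<times> \<Omega>\<close> and the two mixed blocks.
  The first block is \<open>Tr (P K\<^sub>\<mu> P \<gamma>)\<close> with \<open>P = P\<^sub>\<Omega>\<^sup>\<perp>\<close>; diagonalising the Hermitian matrix
  \<open>P K\<^sub>\<mu> P = \<Sum>\<^sub>k \<lambda>\<^sub>k u\<^sub>k u\<^sub>k\<^sup>*\<close> by a unitary (from a unitary Schur decomposition) gives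
  \<open>Tr (P K\<^sub>\<mu> P \<gamma>) = \<Sum>\<^sub>k \<lambda>\<^sub>k \<langle>u\<^sub>k, \<gamma> u\<^sub>k\<rangle>\<close> with \<open>0 \<le> \<langle>u\<^sub>k, \<gamma> u\<^sub>k\<rangle> \<le> 1\<close>, hence at least the
  sum of the negative \<open>\<lambda>\<^sub>k\<close>. On \<open>\<Omega> \<times> \<Omega>\<close> the matrix \<open>-\<Delta>\<close> is diagonally dominant with
  nonpositive off-diagonal entries, so its pairing with \<open>\<gamma> \<ge> 0\<close> is nonnegative and only
  \<open>-\<mu> \<Sum>\<^bsub>x\<in>\<Omega>\<^esub> \<rho>(x)\<close> remains. The mixed blocks only contain hopping terms between
  \<open>x \<in> \<Omega>\<close> and a neighbour \<open>y \<notin> \<Omega>\<close>; positivity of \<open>\<gamma>\<close> on \<open>span {e\<^sub>x, e\<^sub>y}\<close> gives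
  \<open>Re (\<gamma>\<^sub>x\<^sub>y + \<gamma>\<^sub>y\<^sub>x) \<le> 2 \<surd>(\<gamma>\<^sub>x\<^sub>x \<gamma>\<^sub>y\<^sub>y) \<le> 2 \<surd>\<delta>\<close>, and such an \<open>x\<close> lies in \<open>\<partial>\<Omega>\<close>
  and has at most \<open>2d\<close> neighbours.
\<close>

section \<open>Matrix traces and unitary triangularisation\<close>

lemma index_mult_mat_sum:
  "A \<in> carrier_mat n m \<Longrightarrow> B \<in> carrier_mat m k \<Longrightarrow> i < n \<Longrightarrow> j < k \<Longrightarrow>
    (A * B) $$ (i, j) = (\<Sum>l<m. A $$ (i, l) * B $$ (l, j))"
  by (simp add: scalar_prod_def atLeast0LessThan)

lemma mat_trace_mult_sum:
  assumes "A \<in> carrier_mat n m" "B \<in> carrier_mat m n"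
  shows "mat_trace (A * B) = (\<Sum>i<n. \<Sum>j<m. A $$ (i, j) * B $$ (j, i))"
  unfolding mat_trace_def using assms
  by (auto simp: index_mult_mat_sum simp del: index_mult_mat(1) intro!: sum.cong)

lemma mat_trace_mult_commute:
  assumes "A \<in> carrier_mat n m" "B \<in> carrier_mat m n"
  shows "mat_trace (A * B) = mat_trace (B * A)"
  unfolding mat_trace_mult_sum[OF assms] mat_trace_mult_sum[OF assms(2,1)]
  by (subst sum.swap) (simp add: mult.commute)

lemma dim_mat_adjoint [simp]:
  "dim_row (mat_adjoint A) = dim_col A" "dim_col (mat_adjoint A) = dim_row A"
  by (simp_all add: mat_adjoint_def mat_of_rows_def)

lemma index_mat_adjoint [simp]:
  "i < dim_col A \<Longrightarrow> j < dim_row A \<Longrightarrow> mat_adjoint (A :: complex mat) $$ (i, j) = cnj (A $$ (j, i))"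
  by (simp add: mat_adjoint_def mat_of_rows_def)

lemma mat_adjoint_carrier [simp]: "A \<in> carrier_mat n m \<Longrightarrow> mat_adjoint A \<in> carrier_mat m n"
  by (rule carrier_matI) (simp_all add: carrier_matD)

lemma mat_adjoint_mult:
  "A \<in> carrier_mat n m \<Longrightarrow> B \<in> carrier_mat m k \<Longrightarrow>
    mat_adjoint (A * B) = mat_adjoint B * mat_adjoint (A :: complex mat)"
  by (rule eq_matI) (auto simp: scalar_prod_def cnj_sum mult.commute intro: sum.cong)

lemma mat_adjoint_mat_adjoint [simp]: "mat_adjoint (mat_adjoint (A :: complex mat)) = A"
  by (rule eq_matI) auto

lemma mat_adjoint_one [simp]: "mat_adjoint (1\<^sub>m n :: complex mat) = 1\<^sub>m n"
  by (rule eq_matI) auto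

lemma mat_adjoint_four_block_mat:
  assumes "(A :: complex mat) \<in> carrier_mat n1 m1" "B \<in> carrier_mat n1 m2"
    "C \<in> carrier_mat n2 m1" "D \<in> carrier_mat n2 m2"
  shows "mat_adjoint (four_block_mat A B C D) =
    four_block_mat (mat_adjoint A) (mat_adjoint C) (mat_adjoint B) (mat_adjoint D)"
  by (rule eq_matI) (use assms in auto)

definition unitary_mat :: "nat \<Rightarrow> complex mat \<Rightarrow> bool" where
  "unitary_mat n U \<longleftrightarrow> U \<in> carrier_mat n n \<and> mat_adjoint U * U = 1\<^sub>m n"

lemma unitary_mat_similar_mat_wit:
  assumes U: "unitary_mat n U" and A: "A \<in> carrier_mat n n"
  shows "similar_mat_wit A (mat_adjoint U * A * U) U (mat_adjoint U)"
proof -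
  have Uc: "U \<in> carrier_mat n n" and UU: "mat_adjoint U * U = 1\<^sub>m n"
    using U unfolding unitary_mat_def by auto
  have UU': "U * mat_adjoint U = 1\<^sub>m n"
    using mat_mult_left_right_inverse[OF mat_adjoint_carrier[OF Uc] Uc UU] .
  have "similar_mat_wit (mat_adjoint U * A * U) A (mat_adjoint U) U"
    using Uc A UU UU' by (intro similar_mat_witI[of _ _ n]) auto
  then show ?thesis by (rule similar_mat_wit_sym)
qed

lemma unitary_mat_col_norm:
  assumes U: "unitary_mat n U" and k: "k < n"
  shows "(\<Sum>i<n. (cmod (U $$ (i, k)))\<^sup>2) = 1"
proof -
  have Uc: "U \<in> carrier_mat n n" and UU: "mat_adjoint U * U = 1\<^sub>m n"
    using U unfolding unitary_mat_def by auto
  have "complex_of_real (\<Sum>i<n. (cmod (U $$ (i, k)))\<^sup>2) = (mat_adjoint U * U) $$ (k, k)"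
    unfolding index_mult_mat_sum[OF mat_adjoint_carrier[OF Uc] Uc k k] of_real_sum
    using Uc k by (intro sum.cong) (simp_all add: complex_norm_square mult.commute del: of_real_power)
  also have "\<dots> = 1" using k UU by simp
  finally show ?thesis by (simp only: of_real_eq_1_iff)
qed

lemma unitary_mat_of_corthogonal:
  assumes ws: "set ws \<subseteq> carrier_vec n" "corthogonal ws" "length ws = n"
  defines "U \<equiv> mat n n (\<lambda>(k, i). ws ! i $ k / complex_of_real (sqrt (Re (ws ! i \<bullet>c ws ! i))))"
  shows "unitary_mat n U"
proof -
  define r where "r i = Re (ws ! i \<bullet>c ws ! i)" for i
  have r: "ws ! i \<bullet>c ws ! i = complex_of_real (r i)" "0 < r i" if "i < n" for i
  proof -
    have "ws ! i \<bullet>c ws ! i \<ge> 0" "ws ! i \<bullet>c ws ! i \<noteq> 0"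
      using conjugate_square_ge_0_vec corthogonalD[OF ws(2), of i i] that ws(3) by auto
    then show "ws ! i \<bullet>c ws ! i = complex_of_real (r i)" "0 < r i"
      unfolding r_def by (auto simp: less_eq_complex_def complex_eq_iff)
  qed
  have dim_ws: "dim_vec (ws ! i) = n" if "i < n" for i
    using ws that by (metis carrier_vecD nth_mem subsetD)
  have U: "U \<in> carrier_mat n n" unfolding U_def by simp
  have "(mat_adjoint U * U) $$ (i, j) = 1\<^sub>m n $$ (i, j)" if ij: "i < n" "j < n" for i j
  proof -
    have "(mat_adjoint U * U) $$ (i, j) = (\<Sum>k<n. mat_adjoint U $$ (i, k) * U $$ (k, j))"
      by (rule index_mult_mat_sum[OF mat_adjoint_carrier[OF U] U ij])
    also have "\<dots> =
        (\<Sum>k<n. ws ! j $ k * cnj (ws ! i $ k)) / complex_of_real (sqrt (r i) * sqrt (r j))"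
      unfolding sum_divide_distrib using ij
      by (intro sum.cong) (simp_all add: U_def r_def of_real_mult mult_ac)
    also have "(\<Sum>k<n. ws ! j $ k * cnj (ws ! i $ k)) = ws ! j \<bullet>c ws ! i"
      using dim_ws[OF ij(1)] dim_ws[OF ij(2)] by (simp add: scalar_prod_def atLeast0LessThan)
    also have "\<dots> / complex_of_real (sqrt (r i) * sqrt (r j)) = 1\<^sub>m n $$ (i, j)"
    proof (cases "i = j")
      case True
      then show ?thesis using r[OF ij(1)] ij by (simp add: real_sqrt_mult_self)
    next
      case False
      then show ?thesis using corthogonalD[OF ws(2), of j i] ij ws(3) by simp
    qed
    finally show ?thesis .
  qed
  then have "mat_adjoint U * U = 1\<^sub>m n"
    using U by (intro eq_matI) auto
  then show ?thesis using U unfolding unitary_mat_def by blast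
qed

lemma unitary_mat_first_col:
  assumes v: "v \<in> carrier_vec n" "v \<noteq> 0\<^sub>v n"
  obtains U c where "unitary_mat n U" "col U 0 = c \<cdot>\<^sub>v v"
proof -
  define b where "b = basis_completion v"
  obtain vs where bv: "b = v # vs" unfolding b_def basis_completion_def Let_def by blast
  define ws where "ws = gram_schmidt n b"
  have ws: "set ws \<subseteq> carrier_vec n" "corthogonal ws" "length ws = n" and "hd ws = v"
  proof -
    interpret cof_vec_space n "TYPE(complex)" .
    note b = basis_completion[OF v, folded b_def]
    note gs = gram_schmidt_result[OF b(2) b(4) b(5) ws_def]
    show "set ws \<subseteq> carrier_vec n" "corthogonal ws" "length ws = n"
      using gs(2-4) b(6) by simp_all
    show "hd ws = v" unfolding ws_def bv by (rule gram_schmidt_hd[OF v(1)])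
  qed
  have n: "0 < n"
  proof (rule ccontr)
    assume "\<not> 0 < n"
    then have "v = 0\<^sub>v n" using v(1) by (intro eq_vecI) auto
    with v(2) show False ..
  qed
  have "ws \<noteq> []" using ws(3) n by auto
  with \<open>hd ws = v\<close> have ws0: "ws ! 0 = v" by (simp add: hd_conv_nth)
  define c where "c = 1 / complex_of_real (sqrt (Re (ws ! 0 \<bullet>c ws ! 0)))"
  have "col (mat n n (\<lambda>(k, i). ws ! i $ k / complex_of_real (sqrt (Re (ws ! i \<bullet>c ws ! i))))) 0
      = c \<cdot>\<^sub>v v"
    by (rule eq_vecI) (use n v(1) in \<open>simp_all add: ws0 c_def\<close>)
  then show ?thesis by (rule that[OF unitary_mat_of_corthogonal[OF ws]])
qed

lemma unitary_conj_eigenvector_first_col: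
  assumes U: "unitary_mat n U" and A: "A \<in> carrier_mat n n"
    and ev: "A *\<^sub>v col U 0 = e \<cdot>\<^sub>v col U 0" and i: "i < n"
  shows "(mat_adjoint U * A * U) $$ (i, 0) = (if i = 0 then e else 0)"
proof -
  have Uc: "U \<in> carrier_mat n n" and UU: "mat_adjoint U * U = 1\<^sub>m n"
    using U unfolding unitary_mat_def by auto
  have Ua: "mat_adjoint U \<in> carrier_mat n n" using Uc by simp
  have n: "0 < n" using i by simp
  have "(mat_adjoint U * A * U) $$ (i, 0) = row (mat_adjoint U) i \<bullet> col (A * U) 0"
    using Ua A Uc i n by (simp add: assoc_mult_mat[OF Ua A Uc])
  also have "col (A * U) 0 = e \<cdot>\<^sub>v col U 0"
    using col_mult2[OF A Uc n] ev by simp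
  also have "row (mat_adjoint U) i \<bullet> (e \<cdot>\<^sub>v col U 0) = e * (row (mat_adjoint U) i \<bullet> col U 0)"
    using Ua Uc by simp
  also have "row (mat_adjoint U) i \<bullet> col U 0 = (mat_adjoint U * U) $$ (i, 0)"
    using Ua Uc i n by simp
  finally show ?thesis using i n by (simp add: UU)
qed

lemma unitary_schur_deflation:
  fixes A :: "complex mat"
  assumes A: "A \<in> carrier_mat (Suc m) (Suc m)"
    and col0: "\<And>i. i < Suc m \<Longrightarrow> A $$ (i, 0) = (if i = 0 then e else 0)"
    and IH: "\<And>A3 :: complex mat. A3 \<in> carrier_mat m m \<Longrightarrow>
      \<exists>U B. similar_mat_wit A3 B U (mat_adjoint U) \<and> upper_triangular B"
  shows "\<exists>U B. similar_mat_wit A B U (mat_adjoint U) \<and> upper_triangular B"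
proof -
  have A': "A \<in> carrier_mat (1 + m) (1 + m)" using A by simp
  obtain A1 A2 A0 A3 where split: "split_block A 1 1 = (A1, A2, A0, A3)"
    by (cases "split_block A 1 1")
  note split_blocks = split_block[OF split carrier_matD[OF A']]
  have blocks: "A1 \<in> carrier_mat 1 1" "A2 \<in> carrier_mat 1 m" "A3 \<in> carrier_mat m m"
      "A = four_block_mat A1 A2 A0 A3"
    using split_blocks(1,2,4,5) .
  have A0: "A0 = 0\<^sub>m m 1"
    using split A col0 unfolding split_block_def Let_def by (auto intro!: eq_matI)
  have ut1: "upper_triangular A1"
    using blocks(1) by (simp add: upper_triangular_def)
  obtain U3 B3 where sim3: "similar_mat_wit A3 B3 U3 (mat_adjoint U3)" and ut3: "upper_triangular B3"
    using IH[OF blocks(3)] by blast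
  note U3 = similar_mat_witD2[OF blocks(3) sim3]
  define U where "U = four_block_mat (1\<^sub>m 1) (0\<^sub>m 1 m) (0\<^sub>m m 1) U3"
  define B where "B = four_block_mat A1 (A2 * U3) (0\<^sub>m m 1) B3"
  have adjU: "mat_adjoint U = four_block_mat (1\<^sub>m 1) (0\<^sub>m 1 m) (0\<^sub>m m 1) (mat_adjoint U3)"
    unfolding U_def using U3 by (subst mat_adjoint_four_block_mat) auto
  have "similar_mat_wit A B U (mat_adjoint U)"
    unfolding adjU unfolding blocks(4) A0 B_def U_def
    by (rule similar_mat_wit_four_block[OF similar_mat_wit_refl[OF blocks(1)] sim3])
      (use blocks U3 in \<open>simp_all add: assoc_mult_mat[of _ 1 m _ m _ m]\<close>)
  moreover have "upper_triangular B"
    unfolding B_def by (rule upper_triangular_four_block[OF blocks(1) U3(5) ut1 ut3])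
  ultimately show ?thesis by blast
qed

lemma unitary_schur_decomposition:
  fixes A :: "complex mat"
  assumes "A \<in> carrier_mat n n"
  shows "\<exists>U B. similar_mat_wit A B U (mat_adjoint U) \<and> upper_triangular B"
  using assms
proof (induction n arbitrary: A)
  case 0
  have "similar_mat_wit A A (1\<^sub>m 0) (mat_adjoint (1\<^sub>m 0))"
    using similar_mat_wit_refl[OF 0] by simp
  moreover have "upper_triangular A" using 0 by (simp add: upper_triangular_def)
  ultimately show ?case by blast
next
  case (Suc m)
  note A = Suc.prems
  obtain es where es: "char_poly A = (\<Prod>a\<leftarrow>es. [:- a, 1:])" "length es = Suc m"
    using char_poly_factorized[OF A] by blast
  then obtain e es' where "es = e # es'" by (cases es) auto
  then have "eigenvalue A e" using es(1) eigenvalue_root_char_poly[OF A] by simp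
  then have "eigenvector A (find_eigenvector A e) e" by (rule find_eigenvector[OF A])
  then obtain v where v: "v \<in> carrier_vec (Suc m)" "v \<noteq> 0\<^sub>v (Suc m)" "A *\<^sub>v v = e \<cdot>\<^sub>v v"
    using carrier_matD(1)[OF A] unfolding eigenvector_def by auto
  obtain W c where W: "unitary_mat (Suc m) W" "col W 0 = c \<cdot>\<^sub>v v"
    by (rule unitary_mat_first_col[OF v(1,2)])
  have Wc: "W \<in> carrier_mat (Suc m) (Suc m)" using W(1) unfolding unitary_mat_def by simp
  have ev: "A *\<^sub>v col W 0 = e \<cdot>\<^sub>v col W 0"
    by (simp add: W(2) mult_mat_vec[OF A v(1)] v(3) smult_smult_assoc mult.commute)
  have simW: "similar_mat_wit A (mat_adjoint W * A * W) W (mat_adjoint W)"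
    by (rule unitary_mat_similar_mat_wit[OF W(1) A])
  have A'c: "mat_adjoint W * A * W \<in> carrier_mat (Suc m) (Suc m)"
    using mult_carrier_mat[OF mult_carrier_mat[OF mat_adjoint_carrier[OF Wc] A] Wc] .
  have "\<exists>U B. similar_mat_wit (mat_adjoint W * A * W) B U (mat_adjoint U) \<and> upper_triangular B"
  proof (rule unitary_schur_deflation[OF A'c _ Suc.IH])
    show "(mat_adjoint W * A * W) $$ (i, 0) = (if i = 0 then e else 0)" if "i < Suc m" for i
      by (rule unitary_conj_eigenvector_first_col[OF W(1) A ev that])
  qed
  then obtain U B where simU: "similar_mat_wit (mat_adjoint W * A * W) B U (mat_adjoint U)"
    and ut: "upper_triangular B" by blast
  have Uc: "U \<in> carrier_mat (Suc m) (Suc m)" using similar_mat_witD2(6)[OF A'c simU] .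
  have "similar_mat_wit A B (W * U) (mat_adjoint (W * U))"
    using similar_mat_wit_trans[OF simW simU] by (simp add: mat_adjoint_mult[OF Wc Uc])
  with ut show ?case by blast
qed

section \<open>Negative part of the trace of a Hermitian matrix\<close>

lemma hermitian_upper_triangular_diagonal:
  assumes B: "B \<in> carrier_mat n n" and ut: "upper_triangular B" and herm: "mat_adjoint B = B"
  shows "B = mat_diag n (\<lambda>k. complex_of_real (Re (B $$ (k, k))))"
proof (rule eq_matI)
  fix i j assume "i < dim_row (mat_diag n (\<lambda>k. complex_of_real (Re (B $$ (k, k)))))"
    "j < dim_col (mat_diag n (\<lambda>k. complex_of_real (Re (B $$ (k, k)))))"
  then have ij: "i < n" "j < n" by (simp_all add: mat_diag_def)
  have sym: "B $$ (a, b) = cnj (B $$ (b, a))" if "a < n" "b < n" for a b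
    using B that arg_cong[OF herm, of "\<lambda>M. M $$ (a, b)"] by simp
  have lower: "B $$ (a, b) = 0" if "a < n" "b < a" for a b
    using ut B that unfolding upper_triangular_def by auto
  show "B $$ (i, j) = mat_diag n (\<lambda>k. complex_of_real (Re (B $$ (k, k)))) $$ (i, j)"
  proof (cases i j rule: linorder_cases)
    case less
    then show ?thesis using sym[OF ij] lower[OF ij(2) less] ij by (simp add: mat_diag_def)
  next
    case equal
    then have "Im (B $$ (i, i)) = 0" using sym[OF ij(1) ij(1)] by (metis cnj.simps(2) neg_equal_zero)
    then show ?thesis using equal ij by (simp add: mat_diag_def complex_eq_iff)
  next
    case greater
    then show ?thesis using lower[OF ij(1) greater] ij by (simp add: mat_diag_def)
  qed
qed (use B in \<open>simp_all add: mat_diag_def\<close>)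

lemma proots_prod_linear_factors: "proots (\<Prod>a\<leftarrow>xs. [:- a, 1:]) = mset (xs :: complex list)"
proof (induction xs)
  case (Cons a xs)
  have "(\<Prod>a\<leftarrow>xs. [:- a, 1:]) \<noteq> 0" by (auto simp: prod_list_zero_iff)
  then have "proots ([:- a, 1:] * (\<Prod>a\<leftarrow>xs. [:- a, 1:])) = {#a#} + mset xs"
    using Cons.IH by (subst proots_mult) auto
  then show ?case by simp
qed simp

lemma neg_trace_upper_triangular:
  assumes "B \<in> carrier_mat n n" "upper_triangular B"
  shows "neg_trace B = (\<Sum>k<n. min (Re (B $$ (k, k))) 0)"
proof -
  have "neg_trace B = sum_list (map (\<lambda>z. min (Re z) 0) (diag_mat B))"
    unfolding neg_trace_def char_poly_upper_triangular[OF assms] proots_prod_linear_factors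
    unfolding mset_map[symmetric] sum_mset_sum_list ..
  also have "\<dots> = (\<Sum>k<n. min (Re (B $$ (k, k))) 0)"
    using assms(1) by (simp add: diag_mat_def interv_sum_list_conv_sum_set_nat atLeast0LessThan)
  finally show ?thesis .
qed

lemma hermitian_unitary_diagonalization:
  assumes A: "A \<in> carrier_mat n n" and herm: "mat_adjoint A = A"
  obtains U lam where
    "similar_mat_wit A (mat_diag n (\<lambda>k. complex_of_real (lam k))) U (mat_adjoint U)"
    "neg_trace A = (\<Sum>k<n. min (lam k) 0)"
proof -
  obtain U B where sim: "similar_mat_wit A B U (mat_adjoint U)" and ut: "upper_triangular B"
    using unitary_schur_decomposition[OF A] by blast
  note D = similar_mat_witD2[OF A sim]
  have Ua: "mat_adjoint U \<in> carrier_mat n n" using D(6) by simp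
  have B: "B = mat_adjoint U * A * U"
    using similar_mat_witD2(3)[OF D(5) similar_mat_wit_sym[OF sim]] .
  have "mat_adjoint B = mat_adjoint U * mat_adjoint (mat_adjoint U * A)"
    unfolding B by (rule mat_adjoint_mult[OF mult_carrier_mat[OF Ua A] D(6)])
  also have "\<dots> = mat_adjoint U * (A * U)"
    by (simp add: mat_adjoint_mult[OF Ua A] herm)
  also have "\<dots> = B"
    unfolding B by (rule assoc_mult_mat[OF Ua A D(6), symmetric])
  finally have "mat_adjoint B = B" .
  then have diag: "B = mat_diag n (\<lambda>k. complex_of_real (Re (B $$ (k, k))))"
    by (rule hermitian_upper_triangular_diagonal[OF D(5) ut])
  have "neg_trace A = neg_trace B"
    unfolding neg_trace_def using sim char_poly_similar unfolding similar_mat_def by metis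
  then have "neg_trace A = (\<Sum>k<n. min (Re (B $$ (k, k))) 0)"
    using neg_trace_upper_triangular[OF D(5) ut] by simp
  with sim diag show ?thesis using that by metis
qed

definition quad_form :: "complex mat \<Rightarrow> nat \<Rightarrow> (nat \<Rightarrow> complex) \<Rightarrow> complex" where
  "quad_form g n v = (\<Sum>i<n. \<Sum>j<n. cnj (v i) * g $$ (i, j) * v j)"

lemma density_matrix_quad_form:
  assumes "density_matrix n g"
  shows "0 \<le> Re (quad_form g n v)" "Re (quad_form g n v) \<le> (\<Sum>i<n. (cmod (v i))\<^sup>2)"
  using assms unfolding density_matrix_def quad_form_def by blast+

lemma index_adjoint_conj_diag:
  assumes U: "U \<in> carrier_mat n n" and g: "g \<in> carrier_mat n n" and k: "k < n"
  shows "(mat_adjoint U * g * U) $$ (k, k) = quad_form g n (\<lambda>i. U $$ (i, k))"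
proof -
  have Ua: "mat_adjoint U \<in> carrier_mat n n" using U by simp
  have inner: "(mat_adjoint U * g) $$ (k, j) = (\<Sum>i<n. cnj (U $$ (i, k)) * g $$ (i, j))"
    if "j < n" for j
    unfolding index_mult_mat_sum[OF Ua g k that] using U k by (intro sum.cong) auto
  have "(mat_adjoint U * g * U) $$ (k, k) = (\<Sum>j<n. (\<Sum>i<n. cnj (U $$ (i, k)) * g $$ (i, j)) * U $$ (j, k))"
    unfolding index_mult_mat_sum[OF mult_carrier_mat[OF Ua g] U k k] by (intro sum.cong) (simp_all add: inner)
  also have "\<dots> = quad_form g n (\<lambda>i. U $$ (i, k))"
    unfolding quad_form_def sum_distrib_right by (subst sum.swap) simp
  finally show ?thesis .
qed

lemma mat_trace_unitary_diag_mult: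
  assumes sim: "similar_mat_wit A (mat_diag n (\<lambda>k. complex_of_real (lam k))) U (mat_adjoint U)"
    and A: "A \<in> carrier_mat n n" and g: "g \<in> carrier_mat n n"
  shows "mat_trace (A * g) = (\<Sum>k<n. quad_form g n (\<lambda>i. U $$ (i, k)) * complex_of_real (lam k))"
proof -
  define D where "D = mat_diag n (\<lambda>k. complex_of_real (lam k))"
  note W = similar_mat_witD2[OF A sim[folded D_def]]
  have Dc: "D \<in> carrier_mat n n" unfolding D_def by simp
  have square: "X * Y \<in> carrier_mat n n" "X * Y * Z = X * (Y * Z)"
    if "X \<in> carrier_mat n n" "Y \<in> carrier_mat n n" "Z \<in> carrier_mat n n"
    for X Y Z :: "complex mat"
    using that by auto
  have Ag: "A * g = (U * D) * (mat_adjoint U * g)"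
    using W(3,6,7) Dc g by (simp add: square)
  have "mat_trace (A * g) = mat_trace ((mat_adjoint U * g) * (U * D))"
    unfolding Ag by (rule mat_trace_mult_commute[of _ n n]) (use W(6,7) Dc g in \<open>simp_all add: square\<close>)
  also have "(mat_adjoint U * g) * (U * D) = (mat_adjoint U * g * U) * D"
    using W(6,7) Dc g by (simp add: square)
  also have "mat_trace \<dots> = (\<Sum>k<n. (mat_adjoint U * g * U) $$ (k, k) * complex_of_real (lam k))"
    using W(6,7) g unfolding mat_trace_def D_def
    by (subst mat_diag_mult_right[of _ n n]) (simp_all add: square)
  also have "\<dots> = (\<Sum>k<n. quad_form g n (\<lambda>i. U $$ (i, k)) * complex_of_real (lam k))"
    using index_adjoint_conj_diag[OF W(6) g] by simp
  finally show ?thesis .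
qed

lemma neg_trace_le_trace_mult_density:
  assumes g: "density_matrix n g" and A: "A \<in> carrier_mat n n" "mat_adjoint A = A"
  shows "neg_trace A \<le> Re (mat_trace (A * g))"
proof -
  obtain U lam where
    sim: "similar_mat_wit A (mat_diag n (\<lambda>k. complex_of_real (lam k))) U (mat_adjoint U)"
    and neg: "neg_trace A = (\<Sum>k<n. min (lam k) 0)"
    using hermitian_unitary_diagonalization[OF A] by blast
  note W = similar_mat_witD2[OF A(1) sim]
  have U: "unitary_mat n U" using W(2,6) unfolding unitary_mat_def by blast
  have gc: "g \<in> carrier_mat n n" using g unfolding density_matrix_def by blast
  have tr: "Re (mat_trace (A * g)) = (\<Sum>k<n. lam k * Re (quad_form g n (\<lambda>i. U $$ (i, k))))"
    unfolding mat_trace_unitary_diag_mult[OF sim A(1) gc] by (simp add: Re_sum mult.commute)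
  show ?thesis unfolding neg tr
  proof (rule sum_mono)
    fix k assume "k \<in> {..<n}"
    then have "0 \<le> Re (quad_form g n (\<lambda>i. U $$ (i, k)))" "Re (quad_form g n (\<lambda>i. U $$ (i, k))) \<le> 1"
      using density_matrix_quad_form[OF g, of "\<lambda>i. U $$ (i, k)"] unitary_mat_col_norm[OF U, of k]
      by auto
    then show "min (lam k) 0 \<le> lam k * Re (quad_form g n (\<lambda>i. U $$ (i, k)))"
      by (cases "0 \<le> lam k") (auto intro: mult_left_le_one_le order.trans[OF _ mult_left_mono_neg])
  qed
qed

section \<open>Positive semidefinite matrices tested on one or two sites\<close>

lemma sum_mult_delta:
  assumes "x < (n :: nat)"
  shows "(\<Sum>j<n. h j * (if j = x then a else 0)) = h x * (a :: complex)"
proof -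
  have "(\<Sum>j<n. h j * (if j = x then a else 0)) = (\<Sum>j<n. if j = x then h j * a else 0)"
    by (intro sum.cong) auto
  also have "\<dots> = h x * a" using assms by simp
  finally show ?thesis .
qed

lemma quad_form_one_point:
  assumes x: "x < n"
  shows "quad_form g n (\<lambda>i. if i = x then 1 else 0) = g $$ (x, x)"
proof -
  have row: "(\<Sum>j<n. cnj c * g $$ (i, j) * (if j = x then 1 else 0)) = g $$ (i, x) * cnj c"
    for c i
  proof -
    have "(\<Sum>j<n. cnj c * g $$ (i, j) * (if j = x then 1 else 0)) =
        cnj c * (\<Sum>j<n. g $$ (i, j) * (if j = x then 1 else 0))"
      by (simp add: sum_distrib_left mult.assoc)
    then show ?thesis by (simp add: sum_mult_delta[OF x] mult.commute)
  qed
  have "quad_form g n (\<lambda>i. if i = x then 1 else 0) = (\<Sum>i<n. g $$ (i, x) * (if i = x then 1 else 0))"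
    unfolding quad_form_def row by (intro sum.cong) simp_all
  then show ?thesis by (simp add: sum_mult_delta[OF x])
qed

lemma quad_form_two_point:
  assumes x: "x < n" and y: "y < n" and xy: "x \<noteq> y"
  shows "quad_form g n (\<lambda>i. if i = x then a else if i = y then b else 0) =
    cnj a * g $$ (x, x) * a + cnj a * g $$ (x, y) * b + cnj b * g $$ (y, x) * a + cnj b * g $$ (y, y) * b"
proof -
  have two_point: "(\<Sum>j<n. h j * (if j = x then c else if j = y then e else 0)) = h x * c + h y * e"
    for h :: "nat \<Rightarrow> complex" and c e
  proof -
    have "(\<Sum>j<n. h j * (if j = x then c else if j = y then e else 0)) =
        (\<Sum>j<n. h j * (if j = x then c else 0) + h j * (if j = y then e else 0))"
      using xy by (intro sum.cong) auto
    then show ?thesis by (simp add: sum.distrib sum_mult_delta[OF x] sum_mult_delta[OF y])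
  qed
  define v where "v i = (if i = x then a else if i = y then b else 0)" for i
  have row: "(\<Sum>j<n. cnj c * g $$ (i, j) * v j) = (g $$ (i, x) * a + g $$ (i, y) * b) * cnj c"
    for c i
  proof -
    have "(\<Sum>j<n. cnj c * g $$ (i, j) * v j) = cnj c * (\<Sum>j<n. g $$ (i, j) * v j)"
      by (simp add: sum_distrib_left mult.assoc)
    then show ?thesis unfolding v_def two_point by (simp add: mult.commute)
  qed
  have "quad_form g n v = (\<Sum>i<n. (g $$ (i, x) * a + g $$ (i, y) * b) *
      (if i = x then cnj a else if i = y then cnj b else 0))"
    unfolding quad_form_def row by (intro sum.cong) (simp_all add: v_def)
  then show ?thesis unfolding v_def two_point by (simp add: algebra_simps)
qed

lemma density_matrix_diag_le_1:
  assumes "density_matrix n g" "x < n"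
  shows "Re (g $$ (x, x)) \<le> 1"
proof -
  have "Re (quad_form g n (\<lambda>i. if i = x then 1 else 0)) \<le> (\<Sum>i<n. (cmod (if i = x then 1 else 0))\<^sup>2)"
    by (rule density_matrix_quad_form(2)[OF assms(1)])
  then show ?thesis using assms(2) by (simp add: quad_form_one_point if_distrib[of "\<lambda>z. (cmod z)\<^sup>2"] cong: if_cong)
qed

lemma psd_off_diagonal_bound:
  assumes psd: "\<And>v. 0 \<le> Re (quad_form g n v)" and xy: "x < n" "y < n" "x \<noteq> y"
    and a: "0 < a" "Re (g $$ (x, x)) \<le> a" and b: "0 < b" "Re (g $$ (y, y)) \<le> b"
  shows "Re (g $$ (x, y)) + Re (g $$ (y, x)) \<le> 2 * sqrt (a * b)"
proof -
  define r where "r = sqrt b / sqrt a"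
  define s where "s = Re (g $$ (x, y)) + Re (g $$ (y, x))"
  have r: "0 < r" "r * r * a = b" "b / r = sqrt (a * b)"
    using a(1) b(1) by (auto simp: r_def real_sqrt_mult field_simps)
  have "0 \<le> Re (quad_form g n (\<lambda>i. if i = x then complex_of_real r else if i = y then -1 else 0))"
    by (rule psd)
  then have "0 \<le> r * r * Re (g $$ (x, x)) - r * s + Re (g $$ (y, y))"
    unfolding quad_form_two_point[OF xy] s_def by (simp add: algebra_simps)
  moreover have "r * r * Re (g $$ (x, x)) \<le> r * r * a"
    using a(2) r(1) by simp
  ultimately have "r * s \<le> 2 * b" using r(2) b(2) by linarith
  then have "s \<le> 2 * (b / r)" using r(1) by (simp add: field_simps)
  then show ?thesis unfolding s_def r(3) .
qed

lemma psd_trace_diag_dominant_nonneg: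
  fixes M :: "nat \<Rightarrow> nat \<Rightarrow> real"
  assumes psd: "\<And>v. 0 \<le> Re (quad_form g n v)" and I: "I \<subseteq> {..<n}"
    and sym: "\<And>x y. x \<in> I \<Longrightarrow> y \<in> I \<Longrightarrow> M x y = M y x"
    and off_diag: "\<And>x y. x \<in> I \<Longrightarrow> y \<in> I \<Longrightarrow> x \<noteq> y \<Longrightarrow> M x y \<le> 0"
    and row_sum: "\<And>x. x \<in> I \<Longrightarrow> 0 \<le> (\<Sum>y\<in>I. M x y)"
  shows "0 \<le> (\<Sum>x\<in>I. \<Sum>y\<in>I. M x y * Re (g $$ (y, x)))"
proof -
  define a where "a x y = Re (g $$ (y, x))" for x y
  have fin: "finite I" using I finite_subset by blast
  have diag: "0 \<le> a x x" if "x \<in> I" for x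
    using psd[of "\<lambda>i. if i = x then 1 else 0"] quad_form_one_point[of x n g] I that
    by (auto simp: a_def)
  have cross: "a x y + a y x \<le> a x x + a y y" if "x \<in> I" "y \<in> I" "x \<noteq> y" for x y
  proof -
    have "x < n" "y < n" using I that by auto
    then show ?thesis
      using psd[of "\<lambda>i. if i = x then 1 else if i = y then -1 else 0"]
      unfolding quad_form_two_point[OF \<open>x < n\<close> \<open>y < n\<close> that(3)] by (simp add: a_def)
  qed
  txt \<open>Symmetrising \<open>T\<close> turns each of its terms into \<open>M x y\<close> times minus the quadratic
    form of \<open>g\<close> at \<open>e\<^sub>x - e\<^sub>y\<close>, a product of two nonpositive numbers.\<close>
  define T where "T = (\<Sum>x\<in>I. \<Sum>y\<in>I. M x y * (a x y - a x x))"
  have split: "(\<Sum>x\<in>I. \<Sum>y\<in>I. M x y * a x y) = (\<Sum>x\<in>I. (\<Sum>y\<in>I. M x y) * a x x) + T"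
    unfolding T_def sum.distrib[symmetric] sum_distrib_right
    by (intro sum.cong refl) (simp add: sum.distrib[symmetric] algebra_simps)
  define T' where "T' = (\<Sum>x\<in>I. \<Sum>y\<in>I. M x y * (a y x - a y y))"
  have "T = T'"
    unfolding T_def T'_def by (subst sum.swap) (intro sum.cong refl, simp add: sym)
  have "T + T' = (\<Sum>x\<in>I. \<Sum>y\<in>I. M x y * ((a x y + a y x) - (a x x + a y y)))"
    unfolding T_def T'_def sum.distrib[symmetric] by (intro sum.cong refl) (simp add: algebra_simps)
  also have "\<dots> \<ge> 0"
  proof (intro sum_nonneg)
    fix x y assume "x \<in> I" "y \<in> I"
    then show "0 \<le> M x y * ((a x y + a y x) - (a x x + a y y))"
      using cross off_diag by (cases "x = y") (auto intro: mult_nonpos_nonpos)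
  qed
  finally have "0 \<le> T" using \<open>T = T'\<close> by simp
  moreover have "0 \<le> (\<Sum>x\<in>I. (\<Sum>y\<in>I. M x y) * a x x)"
    by (rule sum_nonneg) (simp add: row_sum diag)
  ultimately show ?thesis using split unfolding a_def by linarith
qed

section \<open>Neighbours on the periodic lattice\<close>

definition circle_dist :: "nat \<Rightarrow> nat \<Rightarrow> nat \<Rightarrow> nat" where
  "circle_dist L a b = (let t = if a \<le> b then b - a else a - b in min t (L - t))"

lemma lat_dist_circle_dist:
  "lat_dist d L x y = (\<Sum>i<d. circle_dist L (site_coord L i x) (site_coord L i y))"
  unfolding lat_dist_def circle_dist_def Let_def ..

lemma lat_dist_commute: "lat_dist d L x y = lat_dist d L y x"
  unfolding lat_dist_circle_dist circle_dist_def by (intro sum.cong) auto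

lemma site_coord_less: "0 < L \<Longrightarrow> site_coord L i k < L"
  unfolding site_coord_def by simp

lemma circle_dist_eq_0: "a < L \<Longrightarrow> b < L \<Longrightarrow> circle_dist L a b = 0 \<Longrightarrow> a = b"
  unfolding circle_dist_def by (auto split: if_splits)

lemma circle_dist_eq_1:
  assumes "a < L" "b < L" "circle_dist L a b = 1"
  shows "b = (a + 1) mod L \<or> b = (a + L - 1) mod L"
  using assms unfolding circle_dist_def Let_def min_def
  by (auto split: if_splits simp: le_diff_conv2 mod_if)

lemma site_coord_inj:
  assumes "a < L ^ d" "b < L ^ d" "\<And>i. i < d \<Longrightarrow> site_coord L i a = site_coord L i b"
  shows "a = b"
  using assms
proof (induction d arbitrary: a b)
  case (Suc d)
  have L: "0 < L" using Suc.prems(1) by (cases L) auto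
  have "a div L = b div L"
  proof (rule Suc.IH)
    show "a div L < L ^ d" "b div L < L ^ d"
      using Suc.prems(1,2) L by (simp_all add: div_less_iff_less_mult mult.commute)
    show "site_coord L i (a div L) = site_coord L i (b div L)" if "i < d" for i
      using Suc.prems(3)[of "Suc i"] that unfolding site_coord_def by (simp add: div_mult2_eq)
  qed
  moreover have "a mod L = b mod L"
    using Suc.prems(3)[of 0] unfolding site_coord_def by simp
  ultimately show ?case by (metis div_mult_mod_eq)
qed simp

lemma lat_neighbour_coords:
  assumes L: "0 < L" and xy: "lat_dist d L x y = 1"
  obtains i where "i < d"
    "site_coord L i y \<in> {(site_coord L i x + 1) mod L, (site_coord L i x + L - 1) mod L}"
    "\<And>j. j < d \<Longrightarrow> j \<noteq> i \<Longrightarrow> site_coord L j y = site_coord L j x"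
proof -
  obtain i where i: "i < d" "circle_dist L (site_coord L i x) (site_coord L i y) = 1"
    and others: "\<And>j. j < d \<Longrightarrow> j \<noteq> i \<Longrightarrow> circle_dist L (site_coord L j x) (site_coord L j y) = 0"
    using xy unfolding lat_dist_circle_dist sum_eq_1_iff[OF finite_lessThan] by auto
  show ?thesis
  proof (rule that[OF i(1)])
    show "site_coord L i y \<in> {(site_coord L i x + 1) mod L, (site_coord L i x + L - 1) mod L}"
      using circle_dist_eq_1[OF site_coord_less[OF L] site_coord_less[OF L] i(2)] by blast
    show "site_coord L j y = site_coord L j x" if "j < d" "j \<noteq> i" for j
      using circle_dist_eq_0[OF site_coord_less[OF L] site_coord_less[OF L] others[OF that]] by simp
  qed
qed

lemma card_lat_neighbours:
  assumes L: "0 < L"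
  shows "card {y. y < n_sites d L \<and> lat_dist d L x y = 1} \<le> 2 * d"
proof -
  define S where "S i = {y. y < L ^ d \<and> (\<forall>j<d. j \<noteq> i \<longrightarrow> site_coord L j y = site_coord L j x) \<and>
      site_coord L i y \<in> {(site_coord L i x + 1) mod L, (site_coord L i x + L - 1) mod L}}" for i
  have "{y. y < n_sites d L \<and> lat_dist d L x y = 1} \<subseteq> (\<Union>i<d. S i)"
  proof
    fix y assume "y \<in> {y. y < n_sites d L \<and> lat_dist d L x y = 1}"
    then have y: "y < L ^ d" "lat_dist d L x y = 1" unfolding n_sites_def by auto
    obtain i where "i < d" "site_coord L i y \<in> {(site_coord L i x + 1) mod L, (site_coord L i x + L - 1) mod L}"
      "\<And>j. j < d \<Longrightarrow> j \<noteq> i \<Longrightarrow> site_coord L j y = site_coord L j x"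
      using lat_neighbour_coords[OF L y(2)] by blast
    then show "y \<in> (\<Union>i<d. S i)" using y(1) unfolding S_def by blast
  qed
  then have "card {y. y < n_sites d L \<and> lat_dist d L x y = 1} \<le> card (\<Union>i<d. S i)"
    by (rule card_mono[rotated]) (simp add: S_def)
  also have "\<dots> \<le> (\<Sum>i<d. card (S i))" by (rule card_UN_le) simp
  also have "\<dots> \<le> (\<Sum>i<d. 2)"
  proof (rule sum_mono)
    fix i
    have "inj_on (site_coord L i) (S i)"
    proof (rule inj_onI)
      fix y z assume yz: "y \<in> S i" "z \<in> S i" "site_coord L i y = site_coord L i z"
      show "y = z"
      proof (rule site_coord_inj[of y L d z])
        show "y < L ^ d" "z < L ^ d" using yz unfolding S_def by auto
        show "site_coord L j y = site_coord L j z" if "j < d" for j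
          using yz that unfolding S_def by (cases "j = i") auto
      qed
    qed
    then have "card (S i) = card (site_coord L i ` S i)" by (rule card_image[symmetric])
    also have "\<dots> \<le> card {(site_coord L i x + 1) mod L, (site_coord L i x + L - 1) mod L}"
      by (rule card_mono) (auto simp: S_def)
    also have "\<dots> \<le> 2" by (simp add: card_insert_if)
    finally show "card (S i) \<le> 2" .
  qed
  finally show ?thesis by simp
qed

lemma lat_degree_le:
  assumes "0 < L" "A \<subseteq> {..<n_sites d L}"
  shows "(\<Sum>y\<in>A. if lat_dist d L x y = 1 then 1 else 0 :: real) \<le> 2 * real d"
proof -
  have "(\<Sum>y\<in>A. if lat_dist d L x y = 1 then 1 else 0 :: real) = real (card {y \<in> A. lat_dist d L x y = 1})"
    using finite_subset[OF assms(2)] by (simp add: sum.inter_filter[symmetric])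
  also have "card {y \<in> A. lat_dist d L x y = 1} \<le> card {y. y < n_sites d L \<and> lat_dist d L x y = 1}"
    using assms(2) by (intro card_mono) auto
  finally show ?thesis using card_lat_neighbours[OF assms(1), of d x] by linarith
qed

section \<open>The three blocks of the kinetic energy\<close>

definition Kmu_entry :: "nat \<Rightarrow> nat \<Rightarrow> real \<Rightarrow> nat \<Rightarrow> nat \<Rightarrow> real" where
  "Kmu_entry d L \<mu> x y = (if x = y then 2 * real d - \<mu> else 0) - (if lat_dist d L x y = 1 then 1 else 0)"

lemma Kmu_carrier: "Kmu d L \<mu> \<in> carrier_mat (n_sites d L) (n_sites d L)"
  by (rule carrier_matI) (simp_all add: Kmu_def lapl_def hopT_def)

lemma index_Kmu:
  "x < n_sites d L \<Longrightarrow> y < n_sites d L \<Longrightarrow> Kmu d L \<mu> $$ (x, y) = complex_of_real (Kmu_entry d L \<mu> x y)"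
  by (simp add: Kmu_def lapl_def hopT_def Kmu_entry_def)

lemma Kmu_entry_commute: "Kmu_entry d L \<mu> x y = Kmu_entry d L \<mu> y x"
  unfolding Kmu_entry_def by (simp add: lat_dist_commute eq_commute)

lemma projP_carrier: "projP d L S \<in> carrier_mat (n_sites d L) (n_sites d L)"
  by (simp add: projP_def)

lemma index_projP:
  "x < n_sites d L \<Longrightarrow> y < n_sites d L \<Longrightarrow> projP d L S $$ (x, y) = (if x = y \<and> x \<in> S then 1 else 0)"
  by (simp add: projP_def)

lemma index_projP_mult_projP:
  assumes X: "X \<in> carrier_mat (n_sites d L) (n_sites d L)"
    and xy: "x < n_sites d L" "y < n_sites d L"
  shows "(projP d L S * X * projP d L S) $$ (x, y) = (if x \<in> S \<and> y \<in> S then X $$ (x, y) else 0)"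
proof -
  let ?n = "n_sites d L"
  note P = projP_carrier[of d L S]
  have PX: "(projP d L S * X) $$ (x, l) = (if x \<in> S then X $$ (x, l) else 0)" if "l < ?n" for l
  proof -
    have "(projP d L S * X) $$ (x, l) = (\<Sum>k<?n. if k = x then (if x \<in> S then X $$ (x, l) else 0) else 0)"
      unfolding index_mult_mat_sum[OF P X xy(1) that] using xy(1)
      by (intro sum.cong) (auto simp: index_projP)
    then show ?thesis using xy(1) by simp
  qed
  have "(projP d L S * X * projP d L S) $$ (x, y) =
      (\<Sum>l<?n. if l = y then (if x \<in> S \<and> y \<in> S then X $$ (x, y) else 0) else 0)"
    unfolding index_mult_mat_sum[OF mult_carrier_mat[OF P X] P xy] using xy
    by (intro sum.cong) (auto simp: PX index_projP)
  then show ?thesis using xy(2) by simp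
qed

lemma sum_square_partition:
  fixes f :: "'a \<Rightarrow> 'a \<Rightarrow> 'b :: comm_monoid_add"
  assumes I: "finite I" and \<Omega>: "\<Omega> \<subseteq> I"
  shows "(\<Sum>x\<in>I. \<Sum>y\<in>I. f x y) =
    (\<Sum>x\<in>I - \<Omega>. \<Sum>y\<in>I - \<Omega>. f x y) + (\<Sum>x\<in>\<Omega>. \<Sum>y\<in>\<Omega>. f x y) + (\<Sum>x\<in>\<Omega>. \<Sum>y\<in>I - \<Omega>. f x y + f y x)"
proof -
  have split: "sum h I = sum h (I - \<Omega>) + sum h \<Omega>" for h :: "'a \<Rightarrow> 'b"
    by (rule sum.subset_diff[OF \<Omega> I])
  have swap: "(\<Sum>x\<in>I - \<Omega>. \<Sum>y\<in>\<Omega>. f x y) = (\<Sum>x\<in>\<Omega>. \<Sum>y\<in>I - \<Omega>. f y x)"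
    by (rule sum.swap)
  show ?thesis
    by (simp only: split sum.distrib swap) (simp add: ac_simps)
qed

lemma sum_square_restrict:
  assumes I: "finite I" and S: "S \<subseteq> I"
  shows "(\<Sum>x\<in>I. \<Sum>y\<in>I. if x \<in> S \<and> y \<in> S then h x y else 0) = (\<Sum>x\<in>S. \<Sum>y\<in>S. h x y)"
proof -
  have "(\<Sum>y\<in>I. if x \<in> S \<and> y \<in> S then h x y else 0) = (if x \<in> S then \<Sum>y\<in>S. h x y else 0)" for x
    using assms by (cases "x \<in> S") (simp_all add: sum.inter_restrict[symmetric] Int_absorb1 Int_absorb2)
  then show ?thesis using assms by (simp add: sum.inter_restrict[symmetric] Int_absorb1 Int_absorb2)
qed

lemma neg_trace_compression_le:
  assumes \<gamma>: "density_matrix (n_sites d L) \<gamma>" and S: "S \<subseteq> {..<n_sites d L}"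
  shows "neg_trace (projP d L S * Kmu d L \<mu> * projP d L S) \<le>
    (\<Sum>x\<in>S. \<Sum>y\<in>S. Kmu_entry d L \<mu> x y * Re (\<gamma> $$ (y, x)))"
proof -
  let ?n = "n_sites d L" and ?A = "projP d L S * Kmu d L \<mu> * projP d L S"
  have gc: "\<gamma> \<in> carrier_mat ?n ?n" using \<gamma> unfolding density_matrix_def by blast
  have Ac: "?A \<in> carrier_mat ?n ?n"
    using mult_carrier_mat[OF mult_carrier_mat[OF projP_carrier Kmu_carrier] projP_carrier] .
  have A: "?A $$ (x, y) = (if x \<in> S \<and> y \<in> S then complex_of_real (Kmu_entry d L \<mu> x y) else 0)"
    if "x < ?n" "y < ?n" for x y
    using that by (simp add: index_projP_mult_projP[OF Kmu_carrier] index_Kmu)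
  have "mat_adjoint ?A = ?A"
    using carrier_matD[OF Ac]
    by (intro eq_matI) (auto simp: A Kmu_entry_commute simp del: index_mult_mat(1))
  then have "neg_trace ?A \<le> Re (mat_trace (?A * \<gamma>))"
    by (rule neg_trace_le_trace_mult_density[OF \<gamma> Ac])
  also have "Re (mat_trace (?A * \<gamma>)) =
      (\<Sum>x<?n. \<Sum>y<?n. if x \<in> S \<and> y \<in> S then Kmu_entry d L \<mu> x y * Re (\<gamma> $$ (y, x)) else 0)"
    unfolding mat_trace_mult_sum[OF Ac gc] Re_sum
    by (intro sum.cong refl) (auto simp: A simp del: index_mult_mat(1))
  also have "\<dots> = (\<Sum>x\<in>S. \<Sum>y\<in>S. Kmu_entry d L \<mu> x y * Re (\<gamma> $$ (y, x)))"
    by (rule sum_square_restrict[OF finite_lessThan S])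
  finally show ?thesis .
qed

lemma interior_block_lower_bound:
  assumes L: "0 < L" and \<gamma>: "density_matrix (n_sites d L) \<gamma>" and \<Omega>: "\<Omega> \<subseteq> {..<n_sites d L}"
  shows "- \<mu> * (\<Sum>x\<in>\<Omega>. Re (\<gamma> $$ (x, x))) \<le> (\<Sum>x\<in>\<Omega>. \<Sum>y\<in>\<Omega>. Kmu_entry d L \<mu> x y * Re (\<gamma> $$ (y, x)))"
proof -
  define M where "M x y = (if x = y then 2 * real d else 0) - (if lat_dist d L x y = 1 then 1 else 0)"
    for x y
  have fin: "finite \<Omega>" using \<Omega> finite_subset by blast
  have nonneg: "0 \<le> (\<Sum>x\<in>\<Omega>. \<Sum>y\<in>\<Omega>. M x y * Re (\<gamma> $$ (y, x)))"
  proof (rule psd_trace_diag_dominant_nonneg[OF density_matrix_quad_form(1)[OF \<gamma>] \<Omega>])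
    show "M x y = M y x" for x y by (simp add: M_def lat_dist_commute eq_commute)
    show "M x y \<le> 0" if "x \<noteq> y" for x y using that by (simp add: M_def)
    show "0 \<le> (\<Sum>y\<in>\<Omega>. M x y)" if "x \<in> \<Omega>" for x
      using lat_degree_le[OF L \<Omega>, of x] that fin by (simp add: M_def sum_subtractf)
  qed
  have diag: "(\<Sum>y\<in>\<Omega>. (if x = y then \<mu> else 0) * Re (\<gamma> $$ (y, x))) = \<mu> * Re (\<gamma> $$ (x, x))"
    if "x \<in> \<Omega>" for x
  proof -
    have "(\<Sum>y\<in>\<Omega>. (if x = y then \<mu> else 0) * Re (\<gamma> $$ (y, x))) =
        (\<Sum>y\<in>\<Omega>. if x = y then \<mu> * Re (\<gamma> $$ (y, x)) else 0)"
      by (intro sum.cong) auto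
    then show ?thesis using fin that by simp
  qed
  have "Kmu_entry d L \<mu> x y = M x y - (if x = y then \<mu> else 0)" for x y
    by (simp add: Kmu_entry_def M_def)
  then have "(\<Sum>x\<in>\<Omega>. \<Sum>y\<in>\<Omega>. Kmu_entry d L \<mu> x y * Re (\<gamma> $$ (y, x))) =
      (\<Sum>x\<in>\<Omega>. \<Sum>y\<in>\<Omega>. M x y * Re (\<gamma> $$ (y, x))) -
      (\<Sum>x\<in>\<Omega>. \<Sum>y\<in>\<Omega>. (if x = y then \<mu> else 0) * Re (\<gamma> $$ (y, x)))"
    by (simp add: left_diff_distrib sum_subtractf)
  moreover have "(\<Sum>x\<in>\<Omega>. \<Sum>y\<in>\<Omega>. (if x = y then \<mu> else 0) * Re (\<gamma> $$ (y, x))) =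
      \<mu> * (\<Sum>x\<in>\<Omega>. Re (\<gamma> $$ (x, x)))"
    by (simp add: diag sum_distrib_left)
  ultimately show ?thesis using nonneg by linarith
qed

lemma cross_pair_lower_bound:
  assumes \<gamma>: "density_matrix (n_sites d L) \<gamma>" and \<delta>: "0 < \<delta>"
    and xy: "x < n_sites d L" "y < n_sites d L" "x \<noteq> y" and x: "Re (\<gamma> $$ (x, x)) < \<delta>"
  shows "- (2 * sqrt \<delta> * (if lat_dist d L x y = 1 then 1 else 0)) \<le>
    Kmu_entry d L \<mu> x y * Re (\<gamma> $$ (y, x)) + Kmu_entry d L \<mu> y x * Re (\<gamma> $$ (x, y))"
proof -
  have "Re (\<gamma> $$ (x, y)) + Re (\<gamma> $$ (y, x)) \<le> 2 * sqrt (\<delta> * 1)"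
    using x \<delta> density_matrix_diag_le_1[OF \<gamma> xy(2)]
    by (intro psd_off_diagonal_bound[OF density_matrix_quad_form(1)[OF \<gamma>] xy]) auto
  moreover have "Kmu_entry d L \<mu> y x = Kmu_entry d L \<mu> x y"
    by (rule Kmu_entry_commute)
  ultimately show ?thesis
    using xy(3) by (simp add: Kmu_entry_def)
qed

lemma boundary_block_lower_bound:
  assumes L: "0 < L" and \<gamma>: "density_matrix (n_sites d L) \<gamma>" and \<delta>: "0 < \<delta>"
  defines "\<Omega> \<equiv> {x \<in> {..<n_sites d L}. Re (\<gamma> $$ (x, x)) < \<delta>}"
  shows "- (4 * real d * sqrt \<delta> * real (card (lat_boundary d L \<Omega>))) \<le>
    (\<Sum>x\<in>\<Omega>. \<Sum>y\<in>{..<n_sites d L} - \<Omega>.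
      Kmu_entry d L \<mu> x y * Re (\<gamma> $$ (y, x)) + Kmu_entry d L \<mu> y x * Re (\<gamma> $$ (x, y)))"
proof -
  let ?n = "n_sites d L" and ?S = "{..<n_sites d L} - \<Omega>" and ?B = "lat_boundary d L \<Omega>"
  define hop where "hop x y = (if lat_dist d L x y = 1 then 1 else 0 :: real)" for x y
  have row: "- (if x \<in> ?B then 4 * real d * sqrt \<delta> else 0) \<le>
      (\<Sum>y\<in>?S. Kmu_entry d L \<mu> x y * Re (\<gamma> $$ (y, x)) + Kmu_entry d L \<mu> y x * Re (\<gamma> $$ (x, y)))"
    if x: "x \<in> \<Omega>" for x
  proof -
    have "- (2 * sqrt \<delta> * (\<Sum>y\<in>?S. hop x y)) \<le>
        (\<Sum>y\<in>?S. Kmu_entry d L \<mu> x y * Re (\<gamma> $$ (y, x)) + Kmu_entry d L \<mu> y x * Re (\<gamma> $$ (x, y)))"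
      unfolding sum_distrib_left sum_negf[symmetric] hop_def
      by (rule sum_mono, rule cross_pair_lower_bound[OF \<gamma> \<delta>]) (use x in \<open>auto simp: \<Omega>_def\<close>)
    moreover have "2 * sqrt \<delta> * (\<Sum>y\<in>?S. hop x y) \<le> (if x \<in> ?B then 4 * real d * sqrt \<delta> else 0)"
    proof (cases "x \<in> ?B")
      case True
      then show ?thesis
        using lat_degree_le[OF L, of ?S d x] \<delta> unfolding hop_def by (auto intro: mult_left_mono)
    next
      case False
      then have "hop x y = 0" if "y \<in> ?S" for y
        using x that unfolding hop_def lat_boundary_def by auto
      then show ?thesis using False by simp
    qed
    ultimately show ?thesis by linarith
  qed
  have "?B \<subseteq> \<Omega>" unfolding lat_boundary_def by auto
  then have "- (4 * real d * sqrt \<delta> * real (card ?B)) =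
      (\<Sum>x\<in>\<Omega>. - (if x \<in> ?B then 4 * real d * sqrt \<delta> else 0))"
    using finite_subset[of \<Omega> "{..<?n}"]
    by (simp add: sum_negf sum.inter_restrict[symmetric] Int_absorb1 Int_absorb2 \<Omega>_def)
  also have "\<dots> \<le> (\<Sum>x\<in>\<Omega>. \<Sum>y\<in>?S.
      Kmu_entry d L \<mu> x y * Re (\<gamma> $$ (y, x)) + Kmu_entry d L \<mu> y x * Re (\<gamma> $$ (x, y)))"
    by (rule sum_mono[OF row])
  finally show ?thesis .
qed

theorem lemma3p1:
  fixes d L :: nat and \<mu> \<delta> :: real and \<gamma> :: "complex mat"
  assumes "d \<ge> 1" and "L \<ge> 1"
    and "\<mu> > 0" and "\<delta> > 0"
    and "density_matrix (n_sites d L) \<gamma>"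
  defines "\<rho> \<equiv> \<lambda>x. Re (\<gamma> $$ (x, x))"
  defines "\<Omega> \<equiv> {x \<in> {..<n_sites d L}. \<rho> x < \<delta>}"
  shows "Re (mat_trace (Kmu d L \<mu> * \<gamma>)) \<ge>
           neg_trace (projP d L ({..<n_sites d L} - \<Omega>) * Kmu d L \<mu> * projP d L ({..<n_sites d L} - \<Omega>))
           - 4 * real d * sqrt \<delta> * real (card (lat_boundary d L \<Omega>))
           - \<mu> * (\<Sum>x\<in>\<Omega>. \<rho> x)"
proof -
  let ?n = "n_sites d L" and ?S = "{..<n_sites d L} - \<Omega>" and ?K = "Kmu_entry d L \<mu>"
  have L: "0 < L" using assms(2) by simp
  note \<gamma> = assms(5)
  have \<Omega>: "\<Omega> = {x \<in> {..<?n}. Re (\<gamma> $$ (x, x)) < \<delta>}" unfolding \<Omega>_def \<rho>_def ..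
  have gc: "\<gamma> \<in> carrier_mat ?n ?n" using \<gamma> unfolding density_matrix_def by blast
  have "Re (mat_trace (Kmu d L \<mu> * \<gamma>)) = (\<Sum>x<?n. \<Sum>y<?n. ?K x y * Re (\<gamma> $$ (y, x)))"
    unfolding mat_trace_mult_sum[OF Kmu_carrier gc] Re_sum by (intro sum.cong refl) (simp add: index_Kmu)
  also have "\<dots> = (\<Sum>x\<in>?S. \<Sum>y\<in>?S. ?K x y * Re (\<gamma> $$ (y, x))) + (\<Sum>x\<in>\<Omega>. \<Sum>y\<in>\<Omega>. ?K x y * Re (\<gamma> $$ (y, x)))
      + (\<Sum>x\<in>\<Omega>. \<Sum>y\<in>?S. ?K x y * Re (\<gamma> $$ (y, x)) + ?K y x * Re (\<gamma> $$ (x, y)))"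
    by (rule sum_square_partition) (auto simp: \<Omega>)
  finally have "Re (mat_trace (Kmu d L \<mu> * \<gamma>)) = \<dots>" .
  moreover have "\<Omega> \<subseteq> {..<?n}" "?S \<subseteq> {..<?n}" unfolding \<Omega> by auto
  ultimately show ?thesis
    using neg_trace_compression_le[OF \<gamma>, of ?S \<mu>] interior_block_lower_bound[OF L \<gamma>, of \<Omega> \<mu>]
      boundary_block_lower_bound[OF L \<gamma> assms(4), of \<mu>, folded \<Omega>]
    unfolding \<rho>_def by linarith
qed

end
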